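(* Let $\vec X,\vec Y$ be jointly Gaussian (finite-dimensional) random vectors. Then for any vectors $\vec x,\vec y$, $$\mathbb{P}\Big(\min_i(X_i-x_i)\le0\ \Big|\ \vec Y=\vec y\Big)\le\frac{\mathbb{P}\big(\min_i(X_i-x_i)\le0\big)}{\min_i\mathbb{P}\big(\mathbb{E}[X_i\mid\vec Y]\le\mathbb{E}[X_i\mid\vec Y=\vec y]\big)}.$$ In particular, if $\vec Y$ is centered, then $\mathbb{P}(\min_i(X_i-x_i)\le0)\ge\frac12\mathbb{P}(\min_i(X_i-x_i)\le0\mid\vec Y=\vec0)$. *)

theory Defs
  imports "HOL-Probability.Probability"
begin

definition real_gaussian :: "'a measure \<Rightarrow> ('a \<Rightarrow> real) \<Rightarrow> bool" where
  "real_gaussian M f \<longleftrightarrow> f \<in> borel_measurable M \<and>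
     ((\<exists>m. AE \<omega> in M. f \<omega> = m) \<or>
      (\<exists>m \<sigma>. \<sigma> > 0 \<and> distributed M lborel f (normal_density m \<sigma>)))"

text \<open>A (finite-dimensional) Gaussian random vector: every linear functional is Gaussian.
  Jointly Gaussian vectors X, Y means the pair (X,Y) is a Gaussian vector.\<close>
definition gaussian_vector :: "'a measure \<Rightarrow> ('a \<Rightarrow> 'b::euclidean_space) \<Rightarrow> bool" where
  "gaussian_vector M Z \<longleftrightarrow> Z \<in> borel_measurable M \<and>
     (\<forall>c::'b. real_gaussian M (\<lambda>\<omega>. c \<bullet> Z \<omega>))"

text \<open>Gaussian conditioning of X on Y: X = a + B Y + R almost surely, with R independent of Y.
  Then E[X | Y] = a + B Y, E[X | Y = y] = a + B y, and the conditional law of X given Y = y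
  is the law of a + B y + R.\<close>
definition gaussian_regression ::
  "'a measure \<Rightarrow> ('a \<Rightarrow> real^'n) \<Rightarrow> ('a \<Rightarrow> real^'m) \<Rightarrow> real^'n \<Rightarrow> real^'m^'n \<Rightarrow> ('a \<Rightarrow> real^'n) \<Rightarrow> bool"
  where
  "gaussian_regression M X Y a B R \<longleftrightarrow>
     R \<in> borel_measurable M \<and>
     prob_space.indep_set M
       {R -` A \<inter> space M | A. A \<in> sets (borel :: (real^'n) measure)}
       {Y -` A \<inter> space M | A. A \<in> sets (borel :: (real^'m) measure)} \<and>
     (AE \<omega> in M. X \<omega> = a + B *v Y \<omega> + R \<omega>)"

definition gcond_exp :: "real^'n \<Rightarrow> real^'m^'n \<Rightarrow> ('a \<Rightarrow> real^'m) \<Rightarrow> 'a \<Rightarrow> real^'n" where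
  "gcond_exp a B Y \<omega> = a + B *v Y \<omega>"

definition gcond_exp_at :: "real^'n \<Rightarrow> real^'m^'n \<Rightarrow> real^'m \<Rightarrow> real^'n" where
  "gcond_exp_at a B y = a + B *v y"

definition gcond_prob ::
  "'a measure \<Rightarrow> real^'n \<Rightarrow> real^'m^'n \<Rightarrow> ('a \<Rightarrow> real^'n) \<Rightarrow> real^'m \<Rightarrow> (real^'n \<Rightarrow> bool) \<Rightarrow> real" where
  "gcond_prob M a B R y P = measure M {\<omega> \<in> space M. P (gcond_exp_at a B y + R \<omega>)}"

end

theory Submission
  imports Defs
begin

text \<open>Write \<open>X = E[X | Y] + R\<close> with \<open>R\<close> independent of \<open>Y\<close> and put \<open>v = E[X | Y = y]\<close>.
  The conditional probability is that of the event \<open>{\<exists>i. (v + R)\<^sub>i \<le> x\<^sub>i}\<close>; split it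
  disjointly according to the first coordinate \<open>i\<close> that is hit. The \<open>i\<close>-th piece depends only
  on \<open>R\<close>, so it is independent of \<open>{E[X\<^sub>i | Y] \<le> v\<^sub>i}\<close>, and on the intersection \<open>X\<^sub>i \<le> x\<^sub>i\<close>.
  Summing over \<open>i\<close> gives \<open>P(\<exists>i. X\<^sub>i \<le> x\<^sub>i) \<ge> min\<^sub>i P(E[X\<^sub>i | Y] \<le> v\<^sub>i) \<cdot> P(\<exists>i. (v + R)\<^sub>i \<le> x\<^sub>i)\<close>.
  If \<open>Y\<close> is centered and \<open>y = 0\<close>, then \<open>E[X\<^sub>i | Y] - v\<^sub>i = B\<^sub>i \<bullet> Y\<close> is a centered Gaussian,
  so each of these probabilities is at least \<open>1/2\<close>.\<close>

lemma Min_range_nonpos_iff: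
  fixes f :: "'i::finite \<Rightarrow> real"
  shows "Min (range f) \<le> 0 \<longleftrightarrow> (\<exists>i. f i \<le> 0)"
  by (subst Min_le_iff) auto

lemma countable_disjoint_refinement:
  fixes A :: "'i::countable \<Rightarrow> 'a set"
  assumes "\<And>i. A i \<in> sets N"
  obtains S where "disjoint_family S" "\<And>i. S i \<subseteq> A i" "(\<Union>i. S i) = (\<Union>i. A i)"
    "\<And>i. S i \<in> sets N"
proof
  define S where "S i = A i - (\<Union>j\<in>{j. to_nat j < to_nat i}. A j)" for i
  show "disjoint_family S"
    unfolding disjoint_family_on_def
  proof (intro ballI impI)
    fix i j :: 'i assume "i \<noteq> j"
    then have "to_nat i < to_nat j \<or> to_nat j < to_nat i" by (metis linorder_neqE_nat to_nat_split)
    then show "S i \<inter> S j = {}" unfolding S_def by blast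
  qed
  show "S i \<subseteq> A i" for i unfolding S_def by blast
  show "(\<Union>i. S i) = (\<Union>i. A i)"
  proof (intro equalityI subsetI)
    fix r assume "r \<in> (\<Union>i. A i)"
    then obtain k where "r \<in> A k" by blast
    from ex_has_least_nat[of "\<lambda>i. r \<in> A i" k to_nat, OF this]
    obtain i where "r \<in> A i" "\<forall>j. r \<in> A j \<longrightarrow> to_nat i \<le> to_nat j" by blast
    then have "r \<in> S i" unfolding S_def by (auto simp: not_less[symmetric])
    then show "r \<in> (\<Union>i. S i)" by blast
  qed (auto simp: S_def)
  show "S i \<in> sets N" for i
    unfolding S_def using assms by (intro sets.Diff sets.countable_UN') auto
qed

lemma (in prob_space) prob_Union_indep_pieces_ge:
  assumes "finite I" "disjoint_family_on A I"
    and "\<And>i. i \<in> I \<Longrightarrow> A i \<in> events" "\<And>i. i \<in> I \<Longrightarrow> B i \<in> events"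
    and "\<And>i. i \<in> I \<Longrightarrow> prob (A i \<inter> B i) = prob (A i) * prob (B i)"
    and "\<And>i. i \<in> I \<Longrightarrow> c \<le> prob (B i)"
  shows "c * prob (\<Union>i\<in>I. A i) \<le> prob (\<Union>i\<in>I. A i \<inter> B i)"
proof -
  have "c * prob (\<Union>i\<in>I. A i) = (\<Sum>i\<in>I. c * prob (A i))"
    using assms(1-3) by (subst finite_measure_finite_Union) (auto simp: sum_distrib_left)
  also have "\<dots> \<le> (\<Sum>i\<in>I. prob (A i) * prob (B i))"
    using assms(6) by (intro sum_mono) (metis measure_nonneg mult.commute mult_right_mono)
  also have "\<dots> = prob (\<Union>i\<in>I. A i \<inter> B i)"
    using assms(1-5) disjoint_family_on_bisimulation[OF assms(2), of "\<lambda>i. A i \<inter> B i"]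
    by (subst finite_measure_finite_Union) auto
  finally show ?thesis .
qed

lemma gaussian_regression_indep_preimages:
  assumes "prob_space M" "gaussian_regression M X Y a B R"
    and "S \<in> sets borel" "T \<in> sets borel"
  shows "measure M ((R -` S \<inter> space M) \<inter> (Y -` T \<inter> space M))
    = measure M (R -` S \<inter> space M) * measure M (Y -` T \<inter> space M)"
  using assms unfolding gaussian_regression_def by (intro prob_space.indep_setD) blast+

lemma gaussian_regression_Union_pieces_ge:
  fixes S :: "'i::finite \<Rightarrow> (real^'n) set" and T :: "'i \<Rightarrow> (real^'m) set"
  assumes "prob_space M" and regression: "gaussian_regression M X Y a B R"
    and [measurable]: "Y \<in> borel_measurable M"
    and "disjoint_family S" "\<And>i. S i \<in> sets borel" "\<And>i. T i \<in> sets borel"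
    and "\<And>i. c \<le> measure M (Y -` T i \<inter> space M)"
  shows "c * measure M (\<Union>i. R -` S i \<inter> space M)
    \<le> measure M (\<Union>i. (R -` S i \<inter> space M) \<inter> (Y -` T i \<inter> space M))"
proof -
  interpret prob_space M by fact
  have [measurable]: "R \<in> borel_measurable M"
    using regression by (simp add: gaussian_regression_def)
  show ?thesis
  proof (rule prob_Union_indep_pieces_ge)
    show "disjoint_family (\<lambda>i. R -` S i \<inter> space M)"
      using assms(4) unfolding disjoint_family_on_def by blast
    show "prob ((R -` S i \<inter> space M) \<inter> (Y -` T i \<inter> space M))
        = prob (R -` S i \<inter> space M) * prob (Y -` T i \<inter> space M)" for i
      using gaussian_regression_indep_preimages[OF assms(1,2)] assms(5,6) by blast
  qed (use assms(5-7) in auto)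
qed

lemma gaussian_regression_component_le:
  assumes "gaussian_regression M X Y a B R"
  shows "AE \<omega> in M. \<forall>i. (gcond_exp_at a B y + R \<omega>) $ i \<le> x $ i
    \<longrightarrow> gcond_exp a B Y \<omega> $ i \<le> gcond_exp_at a B y $ i \<longrightarrow> X \<omega> $ i \<le> x $ i"
  using assms unfolding gaussian_regression_def
  by (elim conjE AE_mp) (auto intro!: AE_I2 simp: gcond_exp_def gcond_exp_at_def)

lemma min_regression_prob_mult_gcond_prob_le:
  fixes X :: "'a \<Rightarrow> real^'n" and Y :: "'a \<Rightarrow> real^'m"
  assumes "prob_space M"
    and [measurable]: "X \<in> borel_measurable M" "Y \<in> borel_measurable M"
    and regression: "gaussian_regression M X Y a B R"
  shows "Min (range (\<lambda>i. measure M {\<omega> \<in> space M. gcond_exp a B Y \<omega> $ i \<le> gcond_exp_at a B y $ i}))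
      * gcond_prob M a B R y (\<lambda>v. Min (range (\<lambda>i. v $ i - x $ i)) \<le> 0)
    \<le> measure M {\<omega> \<in> space M. Min (range (\<lambda>i. X \<omega> $ i - x $ i)) \<le> 0}"
proof -
  interpret prob_space M by fact
  define v where "v = gcond_exp_at a B y"
  define p where "p i = measure M {\<omega> \<in> space M. gcond_exp a B Y \<omega> $ i \<le> v $ i}" for i
  have hit_borel: "{r. (v + r) $ i \<le> x $ i} \<in> sets borel" for i
    by measurable
  obtain S where S_disj: "disjoint_family S" and S_sub: "\<And>i. S i \<subseteq> {r. (v + r) $ i \<le> x $ i}"
    and S_Union: "(\<Union>i. S i) = (\<Union>i. {r. (v + r) $ i \<le> x $ i})" and S_borel: "\<And>i. S i \<in> sets borel"
    by (rule countable_disjoint_refinement[of "\<lambda>i. {r. (v + r) $ i \<le> x $ i}", OF hit_borel]) blast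
  define T where "T i = {w. (a + B *v w) $ i \<le> v $ i}" for i
  have T_borel: "T i \<in> sets borel" for i
    unfolding T_def by (simp add: matrix_mult_dot)
  define A where "A i = R -` S i \<inter> space M" for i
  define E where "E i = Y -` T i \<inter> space M" for i
  have p_eq: "p i = prob (E i)" for i
    unfolding p_def E_def T_def gcond_exp_def by (rule arg_cong[where f = prob]) auto
  have "Min (range p) * prob (\<Union>i. A i) \<le> prob (\<Union>i. A i \<inter> E i)"
    unfolding A_def E_def
    by (rule gaussian_regression_Union_pieces_ge[OF assms(1) regression _ S_disj S_borel T_borel])
      (simp_all add: p_eq[unfolded E_def, symmetric])
  moreover have "gcond_prob M a B R y (\<lambda>v. Min (range (\<lambda>i. v $ i - x $ i)) \<le> 0) = prob (\<Union>i. A i)"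
    unfolding gcond_prob_def A_def Min_range_nonpos_iff v_def[symmetric]
    using S_Union by (intro arg_cong[where f = prob]) (auto simp: set_eq_iff)
  moreover have "prob (\<Union>i. A i \<inter> E i) \<le> prob {\<omega> \<in> space M. Min (range (\<lambda>i. X \<omega> $ i - x $ i)) \<le> 0}"
  proof (rule finite_measure_mono_AE)
    show "AE \<omega> in M. \<omega> \<in> (\<Union>i. A i \<inter> E i)
        \<longrightarrow> \<omega> \<in> {\<omega> \<in> space M. Min (range (\<lambda>i. X \<omega> $ i - x $ i)) \<le> 0}"
      using gaussian_regression_component_le[OF regression, of y x]
    proof eventually_elim
      case (elim \<omega>)
      then show ?case
        using S_sub unfolding A_def E_def T_def v_def Min_range_nonpos_iff
        by (fastforce simp: gcond_exp_def)
    qed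
    show "{\<omega> \<in> space M. Min (range (\<lambda>i. X \<omega> $ i - x $ i)) \<le> 0} \<in> events"
      unfolding Min_range_nonpos_iff by measurable
  qed
  ultimately show ?thesis
    unfolding p_def v_def by simp
qed

lemma real_gaussian_integrable:
  assumes "prob_space M" "real_gaussian M f"
  shows "integrable M f"
proof -
  interpret prob_space M by fact
  have f_meas: "f \<in> borel_measurable M"
    using assms(2) by (simp add: real_gaussian_def)
  from assms(2) consider (const) m where "AE \<omega> in M. f \<omega> = m"
    | (normal) m \<sigma> where "\<sigma> > 0" "distributed M lborel f (normal_density m \<sigma>)"
    unfolding real_gaussian_def by blast
  then show ?thesis
  proof cases
    case const
    then show ?thesis
      by (intro integrable_cong_AE_imp[OF _ f_meas, of "\<lambda>_. m"]) auto
  next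
    case normal
    then show ?thesis
      by (intro distributed_integrable_var[OF normal(2)]) (auto simp: integrable_normal_moment_nz_1)
  qed
qed

lemma (in prob_space) normal_distributed_symmetric:
  assumes "distributed M lborel f (normal_density 0 \<sigma>)" "\<sigma> > 0"
  shows "distr M lborel (\<lambda>\<omega>. - f \<omega>) = distr M lborel f"
proof -
  have "distributed M lborel (\<lambda>\<omega>. 0 + (-1) * f \<omega>) (normal_density 0 \<sigma>)"
    using normal_density_affine[OF assms, of "-1" 0] by simp
  then show ?thesis
    using distributed_distr_eq_density[OF assms(1)] distributed_distr_eq_density by fastforce
qed

lemma (in prob_space) prob_nonpos_ge_half_if_symmetric:
  fixes f :: "'a \<Rightarrow> real"
  assumes [measurable]: "f \<in> borel_measurable M"
    and symmetric: "distr M lborel (\<lambda>\<omega>. - f \<omega>) = distr M lborel f"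
  shows "1/2 \<le> prob {\<omega> \<in> space M. f \<omega> \<le> 0}"
proof -
  have distr_atMost: "measure (distr M lborel g) {..0} = prob {\<omega> \<in> space M. g \<omega> \<le> 0}"
    if "g \<in> borel_measurable M" for g :: "'a \<Rightarrow> real"
    using that by (subst measure_distr) (auto intro!: arg_cong[where f = prob])
  have "prob {\<omega> \<in> space M. f \<omega> \<ge> 0} = prob {\<omega> \<in> space M. - f \<omega> \<le> 0}"
    by simp
  also have "\<dots> = prob {\<omega> \<in> space M. f \<omega> \<le> 0}"
    using distr_atMost[of f] distr_atMost[of "\<lambda>\<omega>. - f \<omega>"] symmetric by simp
  finally have mirror: "prob {\<omega> \<in> space M. f \<omega> \<ge> 0} = prob {\<omega> \<in> space M. f \<omega> \<le> 0}" .
  have "1 = prob ({\<omega> \<in> space M. f \<omega> \<le> 0} \<union> {\<omega> \<in> space M. f \<omega> \<ge> 0})"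
    by (subst prob_space[symmetric]) (auto intro!: arg_cong[where f = prob])
  also have "\<dots> \<le> prob {\<omega> \<in> space M. f \<omega> \<le> 0} + prob {\<omega> \<in> space M. f \<omega> \<ge> 0}"
    by (rule measure_Un_le) measurable
  finally show ?thesis
    using mirror by simp
qed

lemma real_gaussian_centered_prob_nonpos_ge_half:
  assumes "prob_space M" "real_gaussian M f" and centered: "integral\<^sup>L M f = 0"
  shows "1/2 \<le> measure M {\<omega> \<in> space M. f \<omega> \<le> 0}"
proof -
  interpret prob_space M by fact
  have f_meas: "f \<in> borel_measurable M"
    using assms(2) by (simp add: real_gaussian_def)
  from assms(2) consider (const) m where "AE \<omega> in M. f \<omega> = m"
    | (normal) m \<sigma> where "\<sigma> > 0" "distributed M lborel f (normal_density m \<sigma>)"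
    unfolding real_gaussian_def by blast
  then show ?thesis
  proof cases
    case const
    have "integral\<^sup>L M f = integral\<^sup>L M (\<lambda>_. m)"
      using const f_meas by (intro integral_cong_AE) auto
    then have "m = 0"
      using centered prob_space by simp
    then have "AE \<omega> in M. f \<omega> \<le> 0"
      using const by auto
    then have "prob {\<omega> \<in> space M. f \<omega> \<le> 0} = 1"
      using f_meas by (subst prob_Collect_eq_1) auto
    then show ?thesis by simp
  next
    case normal
    have "m = 0"
      using normal_distributed_expectation[OF normal] centered by simp
    then show ?thesis
      using normal by (intro prob_nonpos_ge_half_if_symmetric f_meas normal_distributed_symmetric) auto
  qed
qed

lemma gaussian_vector_snd:
  assumes "gaussian_vector M (\<lambda>\<omega>. (X \<omega>, Y \<omega>))" "Y \<in> borel_measurable M"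
  shows "gaussian_vector M Y"
  unfolding gaussian_vector_def
proof (intro conjI allI)
  fix c
  have "real_gaussian M (\<lambda>\<omega>. (0, c) \<bullet> (X \<omega>, Y \<omega>))"
    using assms(1) unfolding gaussian_vector_def by blast
  then show "real_gaussian M (\<lambda>\<omega>. c \<bullet> Y \<omega>)"
    by (simp add: inner_Pair)
qed (rule assms(2))

lemma gaussian_vector_centered_inner_prob_ge_half:
  fixes Y :: "'a \<Rightarrow> real^'m"
  assumes "prob_space M" "gaussian_vector M Y"
    and centered: "\<And>j. integral\<^sup>L M (\<lambda>\<omega>. Y \<omega> $ j) = 0"
  shows "1/2 \<le> measure M {\<omega> \<in> space M. c \<bullet> Y \<omega> \<le> 0}"
proof -
  have gaussian: "real_gaussian M (\<lambda>\<omega>. d \<bullet> Y \<omega>)" for d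
    using assms(2) by (simp add: gaussian_vector_def)
  have "integrable M (\<lambda>\<omega>. axis j 1 \<bullet> Y \<omega>)" for j
    by (rule real_gaussian_integrable[OF assms(1) gaussian])
  then have "integrable M (\<lambda>\<omega>. Y \<omega> $ j)" for j
    by (simp add: inner_axis')
  then have "integral\<^sup>L M (\<lambda>\<omega>. c \<bullet> Y \<omega>) = (\<Sum>j\<in>UNIV. c $ j * integral\<^sup>L M (\<lambda>\<omega>. Y \<omega> $ j))"
    unfolding inner_vec_def by simp
  also have "\<dots> = 0"
    using centered by simp
  finally show ?thesis
    by (rule real_gaussian_centered_prob_nonpos_ge_half[OF assms(1) gaussian])
qed

lemma centered_regression_min_prob_ge_half:
  fixes Y :: "'a \<Rightarrow> real^'m" and B :: "real^'m^'n"
  assumes "prob_space M" "gaussian_vector M Y" "\<And>j. integral\<^sup>L M (\<lambda>\<omega>. Y \<omega> $ j) = 0"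
  shows "1/2 \<le> Min (range (\<lambda>i. measure M {\<omega> \<in> space M. gcond_exp a B Y \<omega> $ i \<le> gcond_exp_at a B 0 $ i}))"
proof -
  have "1/2 \<le> measure M {\<omega> \<in> space M. gcond_exp a B Y \<omega> $ i \<le> gcond_exp_at a B 0 $ i}" for i
    using gaussian_vector_centered_inner_prob_ge_half[OF assms, of "B $ i"]
    by (simp add: gcond_exp_def gcond_exp_at_def matrix_mult_dot)
  then show ?thesis
    by (subst Min_ge_iff) auto
qed

theorem lemma2p1:
  fixes M :: "'a measure"
    and X :: "'a \<Rightarrow> real^'n" and Y :: "'a \<Rightarrow> real^'m"
    and a :: "real^'n" and B :: "real^'m^'n" and R :: "'a \<Rightarrow> real^'n"
    and x :: "real^'n" and y :: "real^'m"
  assumes "prob_space M"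
    and "X \<in> borel_measurable M" and "Y \<in> borel_measurable M"
    and "gaussian_vector M (\<lambda>\<omega>. (X \<omega>, Y \<omega>))"
    and "gaussian_regression M X Y a B R"
  shows
    "(Min (range (\<lambda>i. measure M {\<omega> \<in> space M. gcond_exp a B Y \<omega> $ i \<le> gcond_exp_at a B y $ i})) > 0
      \<longrightarrow> gcond_prob M a B R y (\<lambda>v. Min (range (\<lambda>i. v $ i - x $ i)) \<le> 0)
          \<le> measure M {\<omega> \<in> space M. Min (range (\<lambda>i. X \<omega> $ i - x $ i)) \<le> 0}
            / Min (range (\<lambda>i. measure M {\<omega> \<in> space M. gcond_exp a B Y \<omega> $ i \<le> gcond_exp_at a B y $ i})))
     \<and> ((\<forall>j. integral\<^sup>L M (\<lambda>\<omega>. Y \<omega> $ j) = 0)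
      \<longrightarrow> measure M {\<omega> \<in> space M. Min (range (\<lambda>i. X \<omega> $ i - x $ i)) \<le> 0}
          \<ge> 1/2 * gcond_prob M a B R 0 (\<lambda>v. Min (range (\<lambda>i. v $ i - x $ i)) \<le> 0))"
proof -
  note bound = min_regression_prob_mult_gcond_prob_le[OF assms(1-3,5)]
  note half = centered_regression_min_prob_ge_half[OF assms(1) gaussian_vector_snd[OF assms(4,3)]]
  have "0 \<le> gcond_prob M a B R 0 P" for P
    by (simp add: gcond_prob_def)
  note centered_bound = order_trans[OF mult_right_mono[OF half this] bound[of 0 x]]
  show ?thesis
    using bound[of y x] centered_bound by (auto simp: pos_le_divide_eq mult.commute)
qed

end
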